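(* Let $3\leq l\leq t$ be integers. If $s$ is sufficiently large (in terms of $l$ and $t$) and $n\geq s+(t-1)\binom{s}{l}+1$, then $$ex(n,\{K_{l,t},M_{s+1}\})=(l-1)n+(t-1)\binom{s}{l}-\left\lceil\frac{s(l-1)}{2}\right\rceil.$$
   Context: All graphs are finite and simple. $ex(n,\mathscr{F})$ is the maximum number of edges of an $n$-vertex graph containing no member of the family $\mathscr{F}$ as a subgraph. $K_{l,t}$ is the complete bipartite graph with parts of sizes $l$ and $t$, and $M_{s+1}$ is the matching of $s+1$ pairwise disjoint edges. (The quantity $s+(t-1)\binom{s}{l}+1$ is denoted $n(s)$ in the paper.) *)

theory Defs
  imports Complex_Main
begin

text \<open>A finite simple graph on vertex set V is given by its edge set E, a set of
  2-element subsets of V. Graphs on n vertices are taken with V = {0..<n}.\<close>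

definition simple_graph :: "nat set \<Rightarrow> nat set set \<Rightarrow> bool" where
  "simple_graph V E \<longleftrightarrow> (\<forall>e\<in>E. e \<subseteq> V \<and> card e = 2)"

definition contains_Kbip :: "nat set \<Rightarrow> nat set set \<Rightarrow> nat \<Rightarrow> nat \<Rightarrow> bool" where
  "contains_Kbip V E l t \<longleftrightarrow> (\<exists>A B. A \<subseteq> V \<and> B \<subseteq> V \<and> A \<inter> B = {} \<and>
      card A = l \<and> card B = t \<and> (\<forall>a\<in>A. \<forall>b\<in>B. {a, b} \<in> E))"

definition contains_matching :: "nat set set \<Rightarrow> nat \<Rightarrow> bool" where
  "contains_matching E k \<longleftrightarrow> (\<exists>M. M \<subseteq> E \<and> finite M \<and> card M = k \<and>
      (\<forall>e\<in>M. \<forall>f\<in>M. e \<noteq> f \<longrightarrow> e \<inter> f = {}))"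

definition ex_Kbip_matching :: "nat \<Rightarrow> nat \<Rightarrow> nat \<Rightarrow> nat \<Rightarrow> nat" where
  "ex_Kbip_matching n l t s = Max {card E | E. simple_graph {0..<n} E \<and>
      \<not> contains_Kbip {0..<n} E l t \<and> \<not> contains_matching E (s + 1)}"

end

theory Submission
  imports Defs
begin

text \<open>Let S be the set of vertices of degree at least 2s + 3. Matching the vertices
  of S greedily shows that |S| plus the matching number of G - S is at most s, so G - S has
  O((s - |S|) s) edges. Counting l-subsets of S inside neighbourhoods, K_{l,t}-freeness gives
  the sum over v of C(d_S(v), l) \<le> (t - 1) C(|S|, l), and d \<le> C(d, l) + l - 1 turns this into
  2e(G) \<le> 2(t - 1) C(|S|, l) + 2(l - 1) n - (l - 1) |S| + 2e(G - S). For large s this is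
  largest when |S| = s, because C(s, l) - C(|S|, l) grows like (s - |S|) s^(l-2).

  Put a graph of maximum degree l - 1 with \<lfloor>s(l - 1)/2\<rfloor> edges on s core
  vertices, join t - 1 further vertices to each l-subset of the core and every remaining vertex
  to a fixed (l - 1)-subset. Every edge meets the core, so there is no M_{s+1}, and an l-set
  with t common neighbours would have to lie in the core, whose l-subsets have only t - 1
  common neighbours each.\<close>

section \<open>Binomial coefficient estimates\<close>

lemma choose_add_diff_mult_le:
  assumes "m \<le> s" "1 \<le> l"
  shows "(m choose l) + (s - m) * (m choose (l - 1)) \<le> s choose l"
  using assms(1)
proof (induction s rule: dec_induct)
  case base
  then show ?case by simp
next
  case (step n)
  obtain l' where l': "l = Suc l'" using assms(2) by (cases l) auto
  have "m choose l' \<le> n choose l'" using binomial_right_mono step by simp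
  moreover have "Suc n - m = Suc (n - m)" using step by simp
  ultimately show ?case using step l' by simp
qed

lemma le_choose_add_pred: "1 \<le> l \<Longrightarrow> d \<le> (d choose l) + (l - 1)"
  using choose_add_diff_mult_le[of "l - 1" d l] by (cases "l - 1 \<le> d") auto

lemma linear_le_choose_pred:
  assumes "3 \<le> l" "4 * l \<le> s" "256 \<le> s" "s \<le> 2 * j"
  shows "15 * s \<le> j choose (l - 1)"
proof -
  have "s * (s - 2) \<le> 2 * j * (2 * j - 2)"
    using assms(4) by (intro mult_le_mono) auto
  also have "\<dots> = 4 * (j * (j - 1))" by (simp add: algebra_simps right_diff_distrib')
  moreover have "120 * s \<le> s * (s - 2)"
    using assms(3) mult_le_mono1[of 120 "s - 2" s] by (simp add: mult.commute)
  ultimately have "120 * s \<le> 4 * (j * (j - 1))" by linarith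
  then have "15 * s \<le> j choose 2" by (simp add: choose_two)
  also have "\<dots> \<le> j choose (l - 1)"
    using assms by (intro binomial_mono) auto
  finally show ?thesis .
qed

lemma choose_gap:
  assumes "3 \<le> l" "4 * l \<le> s" "256 \<le> s" "m \<le> s"
  shows "(m choose l) + 5 * s * (s - m) \<le> s choose l"
proof -
  \<comment> \<open>below s/2, compare with \<open>\<lceil>s/2\<rceil>\<close> instead, where C(m', l - 1) is already quadratic in s\<close>
  define m' where "m' = max m ((s + 1) div 2)"
  have m': "m \<le> m'" "m' \<le> s" "s \<le> 2 * m'" "s - m \<le> 3 * (s - m')"
    using assms unfolding m'_def by auto
  have "5 * s * (s - m) \<le> 5 * s * (3 * (s - m'))"
    using m'(4) by (rule mult_le_mono2)
  also have "\<dots> = (s - m') * (15 * s)" by simp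
  also have "\<dots> \<le> (s - m') * (m' choose (l - 1))"
    using linear_le_choose_pred[OF assms(1-3) m'(3)] by simp
  finally have "(m choose l) + 5 * s * (s - m) \<le> (m' choose l) + (s - m') * (m' choose (l - 1))"
    using binomial_right_mono[OF m'(1), of l] by linarith
  also have "\<dots> \<le> s choose l"
    using choose_add_diff_mult_le m' assms(1) by simp
  finally show ?thesis .
qed

lemma choose_gap_dominates:
  assumes "3 \<le> l" "l \<le> t" "4 * l \<le> s" "256 \<le> s" "m \<le> s"
  shows "2 * (t - 1) * (m choose l) + 8 * (s - m) * (s + 1) + s * (l - 1)
           \<le> 2 * (t - 1) * (s choose l) + (l - 1) * m"
proof -
  \<comment> \<open>fresh names for the truncated differences keep \<open>algebra_simps\<close> from splitting them\<close>
  obtain k where s: "s = m + k" using assms(5) le_iff_add by blast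
  obtain T where t: "t - 1 = Suc T" using assms(1,2) not0_implies_Suc[of "t - 1"] by auto
  obtain L where l: "l - 1 = L" by blast
  have "Suc T * ((m choose l) + 5 * s * k) \<le> Suc T * (s choose l)"
    using choose_gap[OF assms(1,3,4,5)] s by (intro mult_le_mono2) simp
  moreover have "k * (L + 8) \<le> k * (2 * s)"
    using assms(1,3) l by (intro mult_le_mono2) simp
  ultimately show ?thesis
    unfolding t l s by (simp add: algebra_simps)
qed

section \<open>Matchings, degrees and the upper bound\<close>

definition nbhd :: "nat set set \<Rightarrow> nat \<Rightarrow> nat set" where
  "nbhd E v = {u. {u, v} \<in> E}"

definition matching :: "nat set set \<Rightarrow> nat set set \<Rightarrow> bool" where
  "matching E M \<longleftrightarrow> M \<subseteq> E \<and> finite M \<and> pairwise disjnt M"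

lemma matching_subset: "matching E M \<Longrightarrow> M' \<subseteq> M \<Longrightarrow> matching E M'"
  unfolding matching_def by (auto intro: finite_subset pairwise_subset)

lemma contains_matching_iff: "contains_matching E k \<longleftrightarrow> (\<exists>M. matching E M \<and> card M = k)"
  unfolding contains_matching_def matching_def pairwise_def disjnt_def by blast

lemma card_matching_le:
  assumes "\<not> contains_matching E (k + 1)" "matching E M"
  shows "card M \<le> k"
proof (rule ccontr)
  assume "\<not> card M \<le> k"
  then obtain M' where "M' \<subseteq> M" "card M' = k + 1"
    using obtain_subset_with_card_n[of "k + 1" M] by auto
  then show False
    using assms matching_subset unfolding contains_matching_iff by blast
qed

locale fin_simple_graph =
  fixes V :: "nat set" and E :: "nat set set"
  assumes finite_vertices: "finite V" and simple: "simple_graph V E"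
begin

lemma edge_subset: "e \<in> E \<Longrightarrow> e \<subseteq> V"
  and card_edge: "e \<in> E \<Longrightarrow> card e = 2"
  using simple unfolding simple_graph_def by auto

lemma finite_edges: "finite E"
  by (rule finite_subset[of _ "Pow V"]) (use edge_subset finite_vertices in auto)

lemma edgeE:
  assumes "e \<in> E"
  obtains a b where "a \<noteq> b" "a \<in> V" "b \<in> V" "e = {a, b}"
  using card_edge[OF assms] edge_subset[OF assms] by (auto simp: card_2_iff)

lemma nbhd_subset: "nbhd E v \<subseteq> V"
  using edge_subset unfolding nbhd_def by auto

lemma self_notin_nbhd: "v \<notin> nbhd E v"
  unfolding nbhd_def using card_edge[of "{v}"] by auto

lemma card_Union_matching:
  assumes "matching E M"
  shows "card (\<Union>M) \<le> 2 * card M"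
proof -
  have "card (\<Union>M) \<le> sum card M" by (rule card_Union_le_sum_card)
  also have "\<dots> = (\<Sum>e\<in>M. 2)"
    using assms card_edge unfolding matching_def by (intro sum.cong) auto
  finally show ?thesis by simp
qed

lemma finite_edge: "e \<in> E \<Longrightarrow> finite e"
  using card_edge by (simp add: card_ge_0_finite)

lemma finite_Union_matching: "matching E M \<Longrightarrow> finite (\<Union>M)"
  unfolding matching_def using finite_edge by (intro finite_Union) auto

lemma card_nbhd_Int:
  "card (nbhd E v \<inter> S) = card {e \<in> E. v \<in> e \<and> e \<subseteq> insert v S}"
proof -
  have "bij_betw (\<lambda>u. {u, v}) (nbhd E v \<inter> S) {e \<in> E. v \<in> e \<and> e \<subseteq> insert v S}"
  proof (rule bij_betw_imageI)
    show "inj_on (\<lambda>u. {u, v}) (nbhd E v \<inter> S)"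
      by (auto simp: inj_on_def doubleton_eq_iff)
    show "(\<lambda>u. {u, v}) ` (nbhd E v \<inter> S) = {e \<in> E. v \<in> e \<and> e \<subseteq> insert v S}"
    proof (intro equalityI subsetI)
      fix e assume e: "e \<in> {e \<in> E. v \<in> e \<and> e \<subseteq> insert v S}"
      then obtain a b where ab: "a \<noteq> b" "e = {a, b}" by (auto elim: edgeE)
      then obtain u where "e = {u, v}" "u \<noteq> v" using e by auto
      then show "e \<in> (\<lambda>u. {u, v}) ` (nbhd E v \<inter> S)"
        using e by (intro rev_image_eqI[of u]) (auto simp: nbhd_def)
    qed (auto simp: nbhd_def)
  qed
  then show ?thesis by (rule bij_betw_same_card)
qed

text \<open>A vertex of degree at least D has a neighbour outside the fewer than D vertices already
  in use.\<close>
lemma matching_extend: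
  assumes "finite X" "\<forall>x\<in>X. D \<le> card (nbhd E x)" "matching E M" "\<Union>M \<inter> X = {}"
    "2 * card M + 2 * card X \<le> D"
  shows "\<exists>M'. matching E M' \<and> card M' = card M + card X"
  using assms
proof (induction X arbitrary: M rule: finite_induct)
  case empty
  then show ?case by auto
next
  case (insert x X)
  have "card (\<Union>M \<union> X) \<le> 2 * card M + card X"
    using card_Un_le[of "\<Union>M" X] card_Union_matching[OF "insert.prems"(2)] by linarith
  also have "\<dots> < card (nbhd E x)" using "insert.prems"(1,4) "insert.hyps" by simp
  finally have "\<not> nbhd E x \<subseteq> \<Union>M \<union> X"
    using card_mono[OF finite_UnI[OF finite_Union_matching[OF "insert.prems"(2)] "insert.hyps"(1)]]
    by (meson not_le)
  then obtain y where y: "y \<in> nbhd E x" "y \<notin> \<Union>M" "y \<notin> X" by blast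
  have x: "x \<notin> \<Union>M" using "insert.prems"(3) by blast
  let ?M = "insert {y, x} M"
  have "matching E ?M"
    using "insert.prems"(2) y x unfolding matching_def nbhd_def pairwise_insert disjnt_def by blast
  moreover have "{y, x} \<notin> M" using x by blast
  then have "card ?M = card M + 1"
    using "insert.prems"(2) unfolding matching_def by simp
  moreover have "\<Union>?M \<inter> X = {}" using "insert.prems"(3) y(3) "insert.hyps"(2) by blast
  ultimately show ?case
    using "insert.IH"[of ?M] "insert.prems"(1,4) "insert.hyps" by auto
qed

text \<open>The vertices of a maximum matching cover every edge.\<close>
lemma card_le_matching_times_degree:
  assumes "H \<subseteq> E" "\<And>M. matching H M \<Longrightarrow> card M \<le> k"
    and "\<And>v. card {e \<in> H. v \<in> e} \<le> \<Delta>"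
  shows "card H \<le> 2 * k * \<Delta>"
proof -
  have finite_H: "finite H" using assms(1) finite_edges finite_subset by blast
  have "matching H {}" by (simp add: matching_def)
  moreover have "\<forall>M. matching H M \<longrightarrow> card M < Suc (card H)"
    using finite_H by (auto simp: matching_def less_Suc_eq_le card_mono)
  ultimately obtain M where M: "matching H M" and max: "\<And>M'. matching H M' \<Longrightarrow> card M' \<le> card M"
    using Lattices_Big.ex_has_greatest_nat[of "matching H" "{}" card] by blast
  have M_E: "matching E M" using M assms(1) unfolding matching_def by blast
  have "H \<subseteq> (\<Union>v\<in>\<Union>M. {e \<in> H. v \<in> e})"
  proof
    fix e assume e: "e \<in> H"
    show "e \<in> (\<Union>v\<in>\<Union>M. {e \<in> H. v \<in> e})"
    proof (rule ccontr)
      assume "e \<notin> (\<Union>v\<in>\<Union>M. {e \<in> H. v \<in> e})"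
      then have "matching H (insert e M)" "e \<notin> M"
        using M e card_edge[of e] assms(1) unfolding matching_def pairwise_insert disjnt_def
        by (auto simp: subset_iff)
      then show False using max[of "insert e M"] M unfolding matching_def by simp
    qed
  qed
  then have "card H \<le> card (\<Union>v\<in>\<Union>M. {e \<in> H. v \<in> e})"
    by (intro card_mono) (auto intro: finite_subset[OF _ finite_H])
  also have "\<dots> \<le> (\<Sum>v\<in>\<Union>M. card {e \<in> H. v \<in> e})"
    by (rule card_UN_le[OF finite_Union_matching[OF M_E]])
  also have "\<dots> \<le> card (\<Union>M) * \<Delta>"
    using sum_bounded_above[of "\<Union>M" "\<lambda>v. card {e \<in> H. v \<in> e}" \<Delta>] assms(3) by simp
  also have "\<dots> \<le> 2 * k * \<Delta>"
    using card_Union_matching[OF M_E] assms(2)[OF M] by (meson le_trans mult_le_mono1 mult_le_mono2 order_refl)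
  finally show ?thesis .
qed

lemma sum_card_nbhd_Int:
  assumes "finite T"
  shows "(\<Sum>v\<in>T. card (nbhd E v \<inter> S)) = (\<Sum>e\<in>E. card {v \<in> T. v \<in> e \<and> e \<subseteq> insert v S})"
  unfolding card_nbhd_Int by (rule sum_multicount_gen[OF assms finite_edges]) simp

lemma twice_card_edges_eq:
  assumes "S \<subseteq> V"
  shows "2 * card E = 2 * (\<Sum>v\<in>V - S. card (nbhd E v \<inter> S)) + (\<Sum>v\<in>S. card (nbhd E v \<inter> S))
                      + 2 * card {e \<in> E. e \<inter> S = {}}"
proof -
  define ends where "ends T e = {v \<in> T. v \<in> e \<and> e \<subseteq> insert v S}" for T e
  have per_edge: "2 * card (ends (V - S) e) + card (ends S e) + 2 * of_bool (e \<inter> S = {}) = 2"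
    if e: "e \<in> E" for e
  proof -
    obtain a b where ab: "a \<noteq> b" "a \<in> V" "b \<in> V" "e = {a, b}" using edgeE[OF e] by blast
    consider "a \<in> S" "b \<in> S" | "a \<in> S" "b \<notin> S" | "a \<notin> S" "b \<in> S" | "a \<notin> S" "b \<notin> S"
      by blast
    then show ?thesis
    proof cases
      case 1
      then have "ends S e = {a, b}" "ends (V - S) e = {}" using ab unfolding ends_def by auto
      then show ?thesis using ab 1 by auto
    next
      case 2
      then have "ends S e = {}" "ends (V - S) e = {b}" using ab unfolding ends_def by auto
      then show ?thesis using ab 2 by auto
    next
      case 3
      then have "ends S e = {}" "ends (V - S) e = {a}" using ab unfolding ends_def by auto
      then show ?thesis using ab 3 by auto
    next
      case 4
      then have "ends S e = {}" "ends (V - S) e = {}" using ab unfolding ends_def by auto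
      then show ?thesis using ab 4 by auto
    qed
  qed
  have "finite S" using assms finite_vertices finite_subset by blast
  then have "(\<Sum>v\<in>V - S. card (nbhd E v \<inter> S)) = (\<Sum>e\<in>E. card (ends (V - S) e))"
    "(\<Sum>v\<in>S. card (nbhd E v \<inter> S)) = (\<Sum>e\<in>E. card (ends S e))"
    unfolding ends_def using finite_vertices by (simp_all add: sum_card_nbhd_Int)
  moreover have "card {e \<in> E. e \<inter> S = {}} = (\<Sum>e\<in>E. of_bool (e \<inter> S = {}))"
    using finite_edges by (simp add: Int_def)
  moreover have "(\<Sum>e\<in>E. 2 * card (ends (V - S) e) + card (ends S e) + 2 * of_bool (e \<inter> S = {}))
      = 2 * card E"
    using per_edge by simp
  ultimately show ?thesis by (simp add: sum.distrib sum_distrib_left)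
qed

text \<open>Both sides count pairs (v, A) with A an l-subset of S inside the neighbourhood of v;
  an l-set with t common neighbours would span a K_{l,t}.\<close>
lemma sum_choose_nbhd_Int_le:
  assumes "S \<subseteq> V" "\<not> contains_Kbip V E l t"
  shows "(\<Sum>v\<in>V. card (nbhd E v \<inter> S) choose l) \<le> (t - 1) * (card S choose l)"
proof -
  have S: "finite S" using assms finite_vertices finite_subset by blast
  define P where "P = {A. A \<subseteq> S \<and> card A = l}"
  have "finite P" unfolding P_def using S by simp
  have choose_eq: "card (nbhd E v \<inter> S) choose l = card {A \<in> P. A \<subseteq> nbhd E v}" for v
  proof -
    have "{A \<in> P. A \<subseteq> nbhd E v} = {A. A \<subseteq> nbhd E v \<inter> S \<and> card A = l}" unfolding P_def by blast
    then show ?thesis using n_subsets[of "nbhd E v \<inter> S" l] S by simp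
  qed
  have common_nbhd: "card {v \<in> V. A \<subseteq> nbhd E v} \<le> t - 1" if A: "A \<in> P" for A
  proof (rule ccontr)
    assume "\<not> ?thesis"
    then have "t \<le> card {v \<in> V. A \<subseteq> nbhd E v}" by simp
    then obtain B where B: "B \<subseteq> {v \<in> V. A \<subseteq> nbhd E v}" "card B = t"
      by (meson obtain_subset_with_card_n)
    have "A \<inter> B = {}" using B(1) self_notin_nbhd by blast
    moreover have "A \<subseteq> V" "card A = l" using A assms(1) unfolding P_def by auto
    moreover have "\<forall>a\<in>A. \<forall>b\<in>B. {a, b} \<in> E" using B(1) unfolding nbhd_def by blast
    ultimately have "contains_Kbip V E l t"
      unfolding contains_Kbip_def using B by (intro exI[of _ A] exI[of _ B]) auto
    then show False using assms(2) by simp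
  qed
  have "(\<Sum>v\<in>V. card (nbhd E v \<inter> S) choose l) = (\<Sum>A\<in>P. card {v \<in> V. A \<subseteq> nbhd E v})"
    unfolding choose_eq by (rule sum_multicount_gen[OF finite_vertices \<open>finite P\<close>]) simp
  also have "\<dots> \<le> (\<Sum>A\<in>P. t - 1)" using common_nbhd by (rule sum_mono)
  also have "\<dots> = (t - 1) * (card S choose l)" using n_subsets[OF S] unfolding P_def by simp
  finally show ?thesis .
qed

lemma twice_card_edges_le:
  assumes "S \<subseteq> V" "\<not> contains_Kbip V E l t" "1 \<le> l"
  shows "2 * card E + (l - 1) * card S
           \<le> 2 * (t - 1) * (card S choose l) + 2 * (l - 1) * card V + 2 * card {e \<in> E. e \<inter> S = {}}"
proof -
  let ?d = "\<lambda>v. card (nbhd E v \<inter> S)"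
  have S: "finite S" using assms(1) finite_vertices finite_subset by blast
  have outside: "(\<Sum>v\<in>V - S. ?d v) \<le> (\<Sum>v\<in>V - S. ?d v choose l) + (l - 1) * card (V - S)"
    using sum_mono[of "V - S" ?d "\<lambda>v. (?d v choose l) + (l - 1)"] le_choose_add_pred[OF assms(3)]
    by (simp add: sum.distrib mult.commute)
  have inside: "(\<Sum>v\<in>S. ?d v) \<le> (\<Sum>v\<in>S. ?d v choose l) + (l - 1) * card S"
    using sum_mono[of S ?d "\<lambda>v. (?d v choose l) + (l - 1)"] le_choose_add_pred[OF assms(3)]
    by (simp add: sum.distrib mult.commute)
  have "(\<Sum>v\<in>V. ?d v choose l) = (\<Sum>v\<in>V - S. ?d v choose l) + (\<Sum>v\<in>S. ?d v choose l)"
    using sum.subset_diff[OF assms(1) finite_vertices] .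
  moreover have "card V = card (V - S) + card S"
    using card_Diff_subset[OF S assms(1)] card_mono[OF finite_vertices assms(1)] by simp
  then have "(l - 1) * card V = (l - 1) * card (V - S) + (l - 1) * card S"
    by (simp add: distrib_left)
  ultimately show ?thesis
    using twice_card_edges_eq[OF assms(1)] outside inside sum_choose_nbhd_Int_le[OF assms(1,2)]
    by linarith
qed

definition high_degree :: "nat \<Rightarrow> nat set" where
  "high_degree s = {v \<in> V. 2 * s + 3 \<le> card (nbhd E v)}"

lemma card_matching_avoiding_high_degree:
  assumes "\<not> contains_matching E (s + 1)" "matching E M" "\<Union>M \<inter> high_degree s = {}"
  shows "card M + card (high_degree s) \<le> s"
proof (rule ccontr)
  let ?S = "high_degree s"
  assume too_many: "\<not> ?thesis"
  obtain X where X: "X \<subseteq> ?S" "card X = min (card ?S) (s + 1)"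
    using obtain_subset_with_card_n[of "min (card ?S) (s + 1)" ?S] by auto
  have "s + 1 - card X \<le> card M" using too_many X(2) by simp
  then obtain M0 where M0: "M0 \<subseteq> M" "card M0 = s + 1 - card X"
    by (meson obtain_subset_with_card_n)
  have "finite X" using finite_subset[OF X(1)] finite_vertices unfolding high_degree_def by simp
  moreover have "\<forall>x\<in>X. 2 * s + 3 \<le> card (nbhd E x)" using X(1) unfolding high_degree_def by blast
  moreover have "matching E M0" using matching_subset[OF assms(2) M0(1)] .
  moreover have "\<Union>M0 \<inter> X = {}" using assms(3) M0(1) X(1) by blast
  moreover have "2 * card M0 + 2 * card X \<le> 2 * s + 3" using M0(2) X(2) by (auto simp: min_def)
  ultimately obtain M' where "matching E M'" "card M' = s + 1"
    using matching_extend[of X "2 * s + 3" M0] M0(2) X(2) by auto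
  then show False using card_matching_le[OF assms(1)] by fastforce
qed

lemma card_high_degree_le:
  "\<not> contains_matching E (s + 1) \<Longrightarrow> card (high_degree s) \<le> s"
  using card_matching_avoiding_high_degree[of s "{}"] by (simp add: matching_def)

lemma card_edges_avoiding_high_degree_le:
  assumes "\<not> contains_matching E (s + 1)"
  shows "card {e \<in> E. e \<inter> high_degree s = {}} \<le> 4 * (s - card (high_degree s)) * (s + 1)"
proof -
  let ?S = "high_degree s" and ?H = "{e \<in> E. e \<inter> high_degree s = {}}"
  have "card ?H \<le> 2 * (s - card ?S) * (2 * s + 2)"
  proof (rule card_le_matching_times_degree)
    show "?H \<subseteq> E" by blast
    show "card M \<le> s - card ?S" if "matching ?H M" for M
    proof -
      have "matching E M" "\<Union>M \<inter> ?S = {}" using that unfolding matching_def by blast+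
      then show ?thesis using card_matching_avoiding_high_degree[OF assms] by fastforce
    qed
    show "card {e \<in> ?H. v \<in> e} \<le> 2 * s + 2" for v
    proof (cases "v \<in> V - ?S")
      case True
      have "card {e \<in> ?H. v \<in> e} \<le> card {e \<in> E. v \<in> e \<and> e \<subseteq> insert v V}"
        using finite_edges edge_subset by (intro card_mono) auto
      also have "\<dots> = card (nbhd E v)" using card_nbhd_Int[of v V] nbhd_subset by (simp add: Int_absorb2)
      also have "\<dots> < 2 * s + 3" using True unfolding high_degree_def by (simp add: not_le)
      finally show ?thesis by simp
    next
      case False
      then have "{e \<in> ?H. v \<in> e} = {}" using edge_subset unfolding high_degree_def by blast
      then show ?thesis by (metis card.empty le0)
    qed
  qed
  then show ?thesis by simp
qed

lemma card_edges_le: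
  assumes "3 \<le> l" "l \<le> t" "4 * l \<le> s" "256 \<le> s"
    and "\<not> contains_Kbip V E l t" "\<not> contains_matching E (s + 1)"
  shows "2 * card E + s * (l - 1) \<le> 2 * ((l - 1) * card V + (t - 1) * (s choose l))"
proof -
  let ?S = "high_degree s"
  have "?S \<subseteq> V" unfolding high_degree_def by blast
  then have core: "2 * card E + (l - 1) * card ?S
      \<le> 2 * (t - 1) * (card ?S choose l) + 2 * (l - 1) * card V + 2 * card {e \<in> E. e \<inter> ?S = {}}"
    using twice_card_edges_le assms(1,5) by simp
  have cover: "card {e \<in> E. e \<inter> ?S = {}} \<le> 4 * (s - card ?S) * (s + 1)"
    using card_edges_avoiding_high_degree_le[OF assms(6)] .
  have gap: "2 * (t - 1) * (card ?S choose l) + 8 * (s - card ?S) * (s + 1) + s * (l - 1)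
      \<le> 2 * (t - 1) * (s choose l) + (l - 1) * card ?S"
    using choose_gap_dominates[OF assms(1-4) card_high_degree_le[OF assms(6)]] .
  obtain L T k where L: "l - 1 = L" and T: "t - 1 = T" and k: "s - card ?S = k" by blast
  show ?thesis using core cover gap unfolding L T k by (simp add: algebra_simps)
qed

end

section \<open>The extremal construction\<close>

lemma add_mod_eq_if:
  fixes i j s :: nat
  assumes "i < s" "j < s"
  shows "(i + j) mod s = (if i + j < s then i + j else i + j - s)"
  using assms by (simp add: mod_if le_mod_geq)

definition circulant :: "nat \<Rightarrow> nat \<Rightarrow> nat set set" where
  "circulant s r = (\<lambda>(i, j). {i, (i + j) mod s}) ` ({0..<s} \<times> {1..r})"

definition antipodal_matching :: "nat \<Rightarrow> nat set set" where
  "antipodal_matching s = (\<lambda>i. {i, i + s div 2}) ` {0..<s div 2}"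

lemma circulant_edge:
  assumes "e \<in> circulant s r" "r < s"
  shows "e \<subseteq> {0..<s} \<and> card e = 2"
proof -
  obtain i j where "e = {i, (i + j) mod s}" "i < s" "1 \<le> j" "j \<le> r"
    using assms(1) unfolding circulant_def by auto
  moreover have "(i + j) mod s \<noteq> i" using calculation assms(2) by (auto simp: add_mod_eq_if)
  ultimately show ?thesis by auto
qed

lemma card_circulant:
  assumes "2 * r < s"
  shows "card (circulant s r) = s * r"
proof -
  have "inj_on (\<lambda>(i, j). {i, (i + j) mod s}) ({0..<s} \<times> {1..r})"
  proof (rule inj_onI)
    fix p p' assume "p \<in> {0..<s} \<times> {1..r}" "p' \<in> {0..<s} \<times> {1..r}"
      and "(\<lambda>(i, j). {i, (i + j) mod s}) p = (\<lambda>(i, j). {i, (i + j) mod s}) p'"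
    then show "p = p'"
      using assms by (auto simp: doubleton_eq_iff add_mod_eq_if split: if_splits)
  qed
  then show ?thesis unfolding circulant_def by (simp add: card_image)
qed

lemma card_circulant_nbhd_le:
  assumes "r < s"
  shows "card (nbhd (circulant s r) v) \<le> 2 * r"
proof -
  have "nbhd (circulant s r) v
          \<subseteq> (\<lambda>j. (v + j) mod s) ` {1..r} \<union> (\<lambda>j. (v + s - j) mod s) ` {1..r}"
  proof
    fix u assume "u \<in> nbhd (circulant s r) v"
    then obtain i j where ij: "{u, v} = {i, (i + j) mod s}" "i < s" "1 \<le> j" "j \<le> r"
      unfolding nbhd_def circulant_def by auto
    then consider "u = i" "v = (i + j) mod s" | "u = (i + j) mod s" "v = i"
      by (auto simp: doubleton_eq_iff)
    then show "u \<in> (\<lambda>j. (v + j) mod s) ` {1..r} \<union> (\<lambda>j. (v + s - j) mod s) ` {1..r}"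
    proof cases
      case 1
      then have "u = (v + s - j) mod s"
        using ij assms by (auto simp: add_mod_eq_if)
      then show ?thesis using ij by auto
    next
      case 2
      then show ?thesis using ij by auto
    qed
  qed
  then have "card (nbhd (circulant s r) v)
      \<le> card ((\<lambda>j. (v + j) mod s) ` {1..r}) + card ((\<lambda>j. (v + s - j) mod s) ` {1..r})"
    by (intro order_trans[OF card_mono card_Un_le]) auto
  also have "\<dots> \<le> 2 * r"
    using card_image_le[of "{1..r}" "\<lambda>j. (v + j) mod s"] card_image_le[of "{1..r}" "\<lambda>j. (v + s - j) mod s"]
    by simp
  finally show ?thesis .
qed

lemma antipodal_matching_edge:
  "e \<in> antipodal_matching s \<Longrightarrow> e \<subseteq> {0..<s} \<and> card e = 2"
  unfolding antipodal_matching_def by auto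

lemma card_antipodal_matching: "card (antipodal_matching s) = s div 2"
proof -
  have "inj_on (\<lambda>i. {i, i + s div 2}) {0..<s div 2}"
    by (rule inj_onI) (auto simp: doubleton_eq_iff)
  then show ?thesis unfolding antipodal_matching_def by (simp add: card_image)
qed

lemma card_antipodal_matching_nbhd_le: "card (nbhd (antipodal_matching s) v) \<le> 1"
proof -
  have "nbhd (antipodal_matching s) v \<subseteq> {if v < s div 2 then v + s div 2 else v - s div 2}"
    unfolding nbhd_def antipodal_matching_def by (auto simp: doubleton_eq_iff)
  then show ?thesis using card_mono[of "{_}"] by fastforce
qed

lemma circulant_antipodal_matching_disjoint:
  assumes "r < s div 2"
  shows "circulant s r \<inter> antipodal_matching s = {}"
proof -
  have False if "{i, (i + j) mod s} = {a, a + s div 2}" "i < s" "1 \<le> j" "j \<le> r" "a < s div 2"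
    for i j a
    using that assms by (auto simp: doubleton_eq_iff add_mod_eq_if split: if_splits)
  then show ?thesis unfolding circulant_def antipodal_matching_def by fastforce
qed

text \<open>A graph on s vertices with maximum degree l - 1 and \<lfloor>s(l - 1)/2\<rfloor> edges: vertex i is
  joined to i \<plusminus> 1, ..., i \<plusminus> (l - 1) div 2 modulo s and, for even l, to its antipode.\<close>

definition core_graph :: "nat \<Rightarrow> nat \<Rightarrow> nat set set" where
  "core_graph s l = circulant s ((l - 1) div 2) \<union> (if even l then antipodal_matching s else {})"

lemma core_graph_edge:
  assumes "e \<in> core_graph s l" "l < s"
  shows "e \<subseteq> {0..<s} \<and> card e = 2"
proof -
  have "(l - 1) div 2 < s" using div_le_dividend[of "l - 1" 2] assms(2) by linarith
  then show ?thesis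
    using assms(1) circulant_edge[of e s "(l - 1) div 2"] antipodal_matching_edge[of e s]
    unfolding core_graph_def by (auto split: if_splits)
qed

lemma card_core_graph:
  assumes "1 \<le> l" "l < s"
  shows "card (core_graph s l) = s * (l - 1) div 2"
proof (cases "even l")
  case True
  define r where "r = (l - 1) div 2"
  have "l - 1 = 2 * r + 1" "r < s div 2" using True assms unfolding r_def by (auto elim!: evenE)
  moreover have "finite (circulant s r)" "finite (antipodal_matching s)"
    unfolding circulant_def antipodal_matching_def by simp_all
  then have "card (core_graph s l) = card (circulant s r) + card (antipodal_matching s)"
    unfolding core_graph_def r_def[symmetric]
    using True card_Un_disjoint circulant_antipodal_matching_disjoint[OF \<open>r < s div 2\<close>] by simp
  ultimately show ?thesis by (simp add: card_circulant card_antipodal_matching algebra_simps)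
next
  case False
  then obtain k where "l - 1 = 2 * k" using assms by (auto elim!: oddE)
  then show ?thesis
    unfolding core_graph_def using False assms card_circulant[of k s] by simp
qed

lemma card_core_graph_nbhd_le:
  assumes "1 \<le> l" "l < s"
  shows "card (nbhd (core_graph s l) v) \<le> l - 1"
proof -
  let ?r = "(l - 1) div 2" and ?A = "nbhd (antipodal_matching s) v"
  have r: "?r < s" using div_le_dividend[of "l - 1" 2] assms(2) by linarith
  have "nbhd (core_graph s l) v = nbhd (circulant s ?r) v \<union> (if even l then ?A else {})"
    unfolding nbhd_def core_graph_def by auto
  then have "card (nbhd (core_graph s l) v)
      \<le> card (nbhd (circulant s ?r) v) + card (if even l then ?A else {})"
    by (metis card_Un_le)
  also have "\<dots> \<le> 2 * ?r + (if even l then 1 else 0)"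
    using card_circulant_nbhd_le[OF r, of v] card_antipodal_matching_nbhd_le[of s v]
    by (intro add_mono) auto
  also have "\<dots> = l - 1" using assms by (auto elim!: evenE oddE)
  finally show ?thesis .
qed

text \<open>The bijection f makes t - 1 of the outer vertices
  s, ..., s + N - 1 adjacent to each l-subset of the core; the remaining outer vertices are
  adjacent to {0..<l - 1}.\<close>

locale extremal_construction =
  fixes l t s n :: nat and f :: "nat \<Rightarrow> nat set \<times> nat"
  assumes l: "3 \<le> l" "l \<le> t" "l < s"
    and n: "s + (t - 1) * (s choose l) \<le> n"
    and f: "bij_betw f {s..<s + (t - 1) * (s choose l)} ({A. A \<subseteq> {0..<s} \<and> card A = l} \<times> {0..<t - 1})"
begin

abbreviation N :: nat where "N \<equiv> (t - 1) * (s choose l)"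

definition attach :: "nat \<Rightarrow> nat set" where
  "attach v = (if v < s + N then fst (f v) else {0..<l - 1})"

definition outer_edges :: "nat set set" where
  "outer_edges = (\<lambda>(v, a). {a, v}) ` (SIGMA v:{s..<n}. attach v)"

definition graph :: "nat set set" where
  "graph = core_graph s l \<union> outer_edges"

lemma attach_subset_card:
  assumes "s \<le> v"
  shows "attach v \<subseteq> {0..<s} \<and> card (attach v) = (if v < s + N then l else l - 1)"
proof (cases "v < s + N")
  case True
  then have "f v \<in> {A. A \<subseteq> {0..<s} \<and> card A = l} \<times> {0..<t - 1}"
    using bij_betw_apply[OF f] assms by simp
  then show ?thesis using True unfolding attach_def by (auto simp: mem_Times_iff)
next
  case False
  then show ?thesis using l unfolding attach_def by auto
qed

lemma finite_attach: "s \<le> v \<Longrightarrow> finite (attach v)"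
  using attach_subset_card finite_subset by blast

lemma graphE:
  assumes "e \<in> graph"
  obtains "e \<in> core_graph s l"
    | a v where "e = {a, v}" "s \<le> v" "v < n" "a \<in> attach v" "a < s"
proof -
  consider "e \<in> core_graph s l" | v a where "e = {a, v}" "s \<le> v" "v < n" "a \<in> attach v"
    using assms unfolding graph_def outer_edges_def by auto
  then show thesis
  proof cases
    case (2 v a)
    then show thesis using that(2) attach_subset_card[of v] by auto
  qed (use that(1) in blast)
qed

lemma simple_graph_graph: "simple_graph {0..<n} graph"
  unfolding simple_graph_def
proof
  fix e assume "e \<in> graph"
  then show "e \<subseteq> {0..<n} \<and> card e = 2"
    by (cases rule: graphE) (use core_graph_edge[of e s l] l n in auto)
qed

lemma core_edge_in_core: "{a, v} \<in> graph \<Longrightarrow> a < s \<Longrightarrow> v < s \<Longrightarrow> {a, v} \<in> core_graph s l"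
  by (erule graphE) (auto simp: doubleton_eq_iff)

lemma nbhd_outer_subset:
  assumes "s \<le> v"
  shows "nbhd graph v \<subseteq> attach v"
proof
  fix u assume "u \<in> nbhd graph v"
  then have "{u, v} \<in> graph" unfolding nbhd_def by simp
  then show "u \<in> attach v"
    by (cases rule: graphE) (use core_graph_edge[of "{u, v}" s l] l assms in \<open>auto simp: doubleton_eq_iff\<close>)
qed

lemma common_nbhd_of_core_set:
  assumes X: "X \<subseteq> {0..<s}" "card X = l" and "X \<subseteq> nbhd graph v"
  shows "s \<le> v \<and> v < s + N \<and> fst (f v) = X"
proof (cases "v < s")
  case True
  have "X \<subseteq> nbhd (core_graph s l) v"
  proof
    fix u assume "u \<in> X"
    then have "{u, v} \<in> graph" "u < s" using assms unfolding nbhd_def by auto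
    then show "u \<in> nbhd (core_graph s l) v" using core_edge_in_core True unfolding nbhd_def by simp
  qed
  moreover have "nbhd (core_graph s l) v \<subseteq> {0..<s}"
  proof
    fix u assume "u \<in> nbhd (core_graph s l) v"
    then show "u \<in> {0..<s}" using core_graph_edge[of "{u, v}" s l] l(3) unfolding nbhd_def by auto
  qed
  then have "finite (nbhd (core_graph s l) v)" by (rule finite_subset) simp
  ultimately have "card X \<le> card (nbhd (core_graph s l) v)" by (rule card_mono[rotated])
  also have "\<dots> \<le> l - 1" using card_core_graph_nbhd_le l by simp
  finally show ?thesis using X l by simp
next
  case False
  then have v: "s \<le> v" by simp
  have X_attach: "X \<subseteq> attach v" using nbhd_outer_subset[OF v] assms(3) by blast
  then have "card X \<le> card (attach v)" using finite_attach[OF v] by (rule card_mono[rotated])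
  then have "v < s + N" using attach_subset_card[OF v] X l by (auto split: if_splits)
  moreover have "X = attach v"
    using card_subset_eq[OF finite_attach[OF v] X_attach] attach_subset_card[OF v] X calculation by simp
  ultimately show ?thesis using v unfolding attach_def by simp
qed

lemma card_common_nbhd_le:
  assumes "X \<subseteq> {0..<s}" "card X = l"
  shows "card {v \<in> {0..<n}. X \<subseteq> nbhd graph v} \<le> t - 1"
proof -
  let ?Z = "{v \<in> {s..<s + N}. fst (f v) = X}"
  have "{v \<in> {0..<n}. X \<subseteq> nbhd graph v} \<subseteq> ?Z" using common_nbhd_of_core_set[OF assms] by auto
  then have "card {v \<in> {0..<n}. X \<subseteq> nbhd graph v} \<le> card ?Z" by (intro card_mono) auto
  also have "card ?Z \<le> card ({X} \<times> {0..<t - 1})"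
  proof (rule card_inj_on_le)
    show "inj_on f ?Z" using f unfolding bij_betw_def by (auto intro: inj_on_subset)
    show "f ` ?Z \<subseteq> {X} \<times> {0..<t - 1}"
    proof (rule image_subsetI)
      fix v assume v: "v \<in> ?Z"
      then have "f v \<in> {A. A \<subseteq> {0..<s} \<and> card A = l} \<times> {0..<t - 1}"
        using bij_betw_apply[OF f] by simp
      then show "f v \<in> {X} \<times> {0..<t - 1}" using v by (cases "f v") auto
    qed
  qed simp
  finally show ?thesis by simp
qed

text \<open>One side of a K_{l,t} lies in the core: otherwise the attachment of an outer vertex
  contains t \<ge> l vertices, forcing t = l, and then the other side is a core l-set.\<close>
lemma no_Kbip: "\<not> contains_Kbip {0..<n} graph l t"
proof
  assume "contains_Kbip {0..<n} graph l t"
  then obtain A B where AB: "A \<subseteq> {0..<n}" "B \<subseteq> {0..<n}" "A \<inter> B = {}" "card A = l" "card B = t"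
    and edges: "\<forall>a\<in>A. \<forall>b\<in>B. {a, b} \<in> graph" unfolding contains_Kbip_def by blast
  have too_many: False
    if "X \<subseteq> {0..<s}" "card X = l" "Y \<subseteq> {v \<in> {0..<n}. X \<subseteq> nbhd graph v}" "card Y = t" for X Y
    using card_mono[OF _ that(3)] card_common_nbhd_le[OF that(1,2)] that(4) l by simp
  show False
  proof (cases "A \<subseteq> {0..<s}")
    case True
    have "B \<subseteq> {v \<in> {0..<n}. A \<subseteq> nbhd graph v}" using AB(2) edges unfolding nbhd_def by blast
    then show False using too_many[OF True AB(4) _ AB(5)] by simp
  next
    case False
    then obtain a where a: "a \<in> A" "s \<le> a" by (meson atLeastLessThan_iff not_le subsetI zero_le)
    have "B \<subseteq> nbhd graph a"
    proof
      fix b assume "b \<in> B"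
      then have "{a, b} \<in> graph" using edges a(1) by blast
      then show "b \<in> nbhd graph a" unfolding nbhd_def by (simp add: insert_commute)
    qed
    then have B_attach: "B \<subseteq> attach a" using nbhd_outer_subset[OF a(2)] by blast
    then have "t \<le> l"
      using card_mono[OF finite_attach[OF a(2)] B_attach] attach_subset_card[OF a(2)] AB(5)
      by (auto split: if_splits)
    then have "card B = l" using l AB(5) by simp
    moreover have "B \<subseteq> {0..<s}" using B_attach attach_subset_card[OF a(2)] by blast
    moreover have "A \<subseteq> {v \<in> {0..<n}. B \<subseteq> nbhd graph v}"
      using AB(1) edges by (auto simp: nbhd_def insert_commute)
    ultimately show False using too_many[of B A] AB(4) \<open>t \<le> l\<close> l by simp
  qed
qed

lemma edge_meets_core:
  assumes "e \<in> graph"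
  shows "e \<inter> {0..<s} \<noteq> {}"
  using assms
proof (cases rule: graphE)
  case 1
  then have "e \<subseteq> {0..<s}" "card e = 2" using core_graph_edge l by auto
  then show ?thesis by (metis Int_absorb2 card.empty zero_neq_numeral)
qed auto

lemma no_matching: "\<not> contains_matching graph (s + 1)"
proof
  assume "contains_matching graph (s + 1)"
  then obtain M where M: "matching graph M" "card M = s + 1" unfolding contains_matching_iff by blast
  define g where "g e = (SOME x. x \<in> e \<inter> {0..<s})" for e
  have g: "g e \<in> e \<inter> {0..<s}" if "e \<in> M" for e
    using edge_meets_core[of e] M(1) that unfolding g_def matching_def by (metis some_in_eq subsetD)
  have "inj_on g M"
  proof (rule inj_onI)
    fix x y assume xy: "x \<in> M" "y \<in> M" "g x = g y"
    show "x = y"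
    proof (rule ccontr)
      assume "x \<noteq> y"
      then have "x \<inter> y = {}" using xy M(1) unfolding matching_def pairwise_def disjnt_def by blast
      moreover have "g x \<in> x" "g x \<in> y" using g[OF xy(1)] g[OF xy(2)] xy(3) by auto
      ultimately show False by blast
    qed
  qed
  then have "card M \<le> card {0..<s}" using g by (intro card_inj_on_le) auto
  then show False using M(2) by simp
qed

lemma card_outer_edges: "card outer_edges = N * l + (n - s - N) * (l - 1)"
proof -
  let ?P = "SIGMA v:{s..<n}. attach v"
  have "inj_on (\<lambda>(v, a). {a, v}) ?P"
  proof (rule inj_onI)
    fix p q assume pq: "p \<in> ?P" "q \<in> ?P" and eq: "(\<lambda>(v, a). {a, v}) p = (\<lambda>(v, a). {a, v}) q"
    obtain v a w b where p: "p = (v, a)" and q: "q = (w, b)" by fastforce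
    have "s \<le> v" "a < s" "s \<le> w" "b < s"
      using pq attach_subset_card[of v] attach_subset_card[of w] unfolding p q by auto
    then show "p = q" using eq unfolding p q by (auto simp: doubleton_eq_iff)
  qed
  then have "card outer_edges = card ?P" unfolding outer_edges_def by (rule card_image)
  also have "\<dots> = (\<Sum>v\<in>{s..<n}. card (attach v))" using finite_attach by simp
  also have "\<dots> = (\<Sum>v\<in>{s..<s + N}. card (attach v)) + (\<Sum>v\<in>{s + N..<n}. card (attach v))"
    using n by (metis le_add1 sum.atLeastLessThan_concat)
  also have "\<dots> = N * l + (n - s - N) * (l - 1)"
    using attach_subset_card by simp
  finally show ?thesis .
qed

lemma card_graph: "card graph + (s * (l - 1) - s * (l - 1) div 2) = (l - 1) * n + N"
proof -
  have "finite (core_graph s l)"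
    unfolding core_graph_def circulant_def antipodal_matching_def by simp
  moreover have "finite outer_edges"
    unfolding outer_edges_def using finite_attach by (intro finite_imageI finite_SigmaI) auto
  moreover have "core_graph s l \<inter> outer_edges = {}"
    using core_graph_edge[of _ s l] attach_subset_card l unfolding outer_edges_def by fastforce
  ultimately have "card graph = card (core_graph s l) + card outer_edges"
    unfolding graph_def by (rule card_Un_disjoint)
  then have "card graph = s * (l - 1) div 2 + (N * l + (n - s - N) * (l - 1))"
    using card_core_graph[of l s] card_outer_edges l by simp
  moreover have "q div 2 + (K * Suc L + (n - s - K) * L) + (q - q div 2) = L * n + K"
    if q: "q = s * L" and K: "s + K \<le> n" for q K L
  proof -
    obtain r where "n = s + K + r" using K le_iff_add by blast
    moreover have "q div 2 + (q - q div 2) = q" by simp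
    ultimately show ?thesis using q by (simp add: algebra_simps)
  qed
  moreover have "l = Suc (l - 1)" using l by simp
  ultimately show ?thesis using n by metis
qed

end

lemma extremal_graph_exists:
  assumes "3 \<le> l" "l \<le> t" "l < s" "s + (t - 1) * (s choose l) \<le> n"
  obtains E where "simple_graph {0..<n} E" "\<not> contains_Kbip {0..<n} E l t"
    "\<not> contains_matching E (s + 1)"
    "card E + (s * (l - 1) - s * (l - 1) div 2) = (l - 1) * n + (t - 1) * (s choose l)"
proof -
  let ?P = "{A. A \<subseteq> {0..<s} \<and> card A = l} \<times> {0..<t - 1}"
  have "finite ?P" by simp
  moreover have "card {s..<s + (t - 1) * (s choose l)} = card ?P"
    by (simp add: card_cartesian_product n_subsets)
  ultimately obtain f where "bij_betw f {s..<s + (t - 1) * (s choose l)} ?P"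
    using finite_same_card_bij[OF finite_atLeastLessThan] by blast
  then interpret extremal_construction l t s n f
    using assms by unfold_locales auto
  show ?thesis using that simple_graph_graph no_Kbip no_matching card_graph by blast
qed

lemma ex_Kbip_matching_eqI:
  assumes "simple_graph {0..<n} E" "\<not> contains_Kbip {0..<n} E l t" "\<not> contains_matching E (s + 1)"
    and "\<And>E'. simple_graph {0..<n} E' \<Longrightarrow> \<not> contains_Kbip {0..<n} E' l t \<Longrightarrow>
           \<not> contains_matching E' (s + 1) \<Longrightarrow> card E' \<le> card E"
  shows "ex_Kbip_matching n l t s = card E"
  unfolding ex_Kbip_matching_def
proof (rule Max_eqI)
  show "finite {card E | E. simple_graph {0..<n} E \<and> \<not> contains_Kbip {0..<n} E l t \<and>
      \<not> contains_matching E (s + 1)}"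
    by (rule finite_subset[of _ "card ` Pow (Pow {0..<n})"]) (auto simp: simple_graph_def)
qed (use assms in auto)

lemma le_add_diff_half:
  fixes c q x :: nat
  shows "2 * c + q \<le> 2 * x \<Longrightarrow> c + (q - q div 2) \<le> x"
  by presburger

lemma ceiling_half: "\<lceil>real q / 2\<rceil> = int (q - q div 2)"
proof -
  have "\<lceil>real q / 2\<rceil> = - (- int q div 2)"
    using ceiling_divide_eq_div[of "int q" 2] by simp
  then show ?thesis by presburger
qed

lemma ex_Kbip_matching_eq:
  assumes "3 \<le> l" "l \<le> t" "4 * l \<le> s" "256 \<le> s" "s + (t - 1) * (s choose l) \<le> n"
  shows "ex_Kbip_matching n l t s + (s * (l - 1) - s * (l - 1) div 2)
           = (l - 1) * n + (t - 1) * (s choose l)"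
proof -
  let ?q = "s * (l - 1)" and ?X = "(l - 1) * n + (t - 1) * (s choose l)"
  obtain E where E: "simple_graph {0..<n} E" "\<not> contains_Kbip {0..<n} E l t"
      "\<not> contains_matching E (s + 1)" "card E + (?q - ?q div 2) = ?X"
    using extremal_graph_exists[of l t s n] assms by auto
  have "card E' \<le> card E" if "simple_graph {0..<n} E'" "\<not> contains_Kbip {0..<n} E' l t"
      "\<not> contains_matching E' (s + 1)" for E'
  proof -
    interpret fin_simple_graph "{0..<n}" E' using that(1) by unfold_locales simp
    have "2 * card E' + ?q \<le> 2 * ?X"
      using card_edges_le[OF assms(1-4) that(2,3)] by simp
    then show ?thesis using le_add_diff_half E(4) by fastforce
  qed
  then show ?thesis using ex_Kbip_matching_eqI[OF E(1-3)] E(4) by simp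
qed

theorem theorem1p2:
  fixes l t :: nat
  assumes "3 \<le> l" and "l \<le> t"
  shows "\<exists>s0. \<forall>s\<ge>s0. \<forall>n. n \<ge> s + (t - 1) * (s choose l) + 1 \<longrightarrow>
           int (ex_Kbip_matching n l t s) =
             (int l - 1) * int n + (int t - 1) * int (s choose l)
             - \<lceil>real (s * (l - 1)) / 2\<rceil>"
proof (intro exI[of _ "256 * l"] allI impI)
  fix s n assume s: "256 * l \<le> s" and n: "s + (t - 1) * (s choose l) + 1 \<le> n"
  let ?q = "s * (l - 1)" and ?X = "(l - 1) * n + (t - 1) * (s choose l)"
  have "4 * l \<le> s" "256 \<le> s" using s assms(1) by linarith+
  then have "ex_Kbip_matching n l t s + (?q - ?q div 2) = ?X"
    using ex_Kbip_matching_eq[OF assms] n by simp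
  then have "int (ex_Kbip_matching n l t s) + int (?q - ?q div 2) = int ?X" by (metis of_nat_add)
  moreover have "int ?X = (int l - 1) * int n + (int t - 1) * int (s choose l)"
    using assms by (simp add: of_nat_diff)
  ultimately show "int (ex_Kbip_matching n l t s) = (int l - 1) * int n + (int t - 1) * int (s choose l)
      - \<lceil>real (s * (l - 1)) / 2\<rceil>"
    using ceiling_half[of ?q] by linarith
qed

end
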